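(* Let $U(0)\geqslant 1$ and $d\geqslant 1$ be integers, $U(n)=U(0)+nd$, and let $S(n)=\overline{U(0)U(1)\cdots U(n-1)U(n)U(n-1)\cdots U(1)U(0)}$ for $n\geqslant 0$ (so $S(0)=U(0)$). Let $n\geqslant 0$ and put $$l=\left\lceil \log_{10}(n d + S(0) + 1)\right\rceil,\qquad t_l=\left\lfloor \frac{10^{l-1}-S(0)}{d}\right\rfloor .$$ Assume $t_l\geqslant 0$, $U(t_l)\geqslant 10^{l-1}$ and $U(t_l+2)<10^l$. Let $s_0=S(t_l)$, $s_1=S(t_l+1)$, $s_2=S(t_l+2)$, and $$\alpha_l=\frac{10^{3l}s_0-10^l(10^l+1)s_1+s_2}{(10^l+1)(10^l-1)^2},\qquad \mu_l=-\frac{10^{2l}s_0-(10^{2l}+1)s_1+s_2}{10^l(10^l-1)^2},$$ $$\theta_l=\frac{10^l s_0-(10^l+1)s_1+s_2}{10^l(10^l+1)(10^l-1)^2}.$$ Then $$S(n)=\alpha_l+\mu_l\,10^{l(n-t_l)}+\theta_l\,10^{2l(n-t_l)}.$$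
   Context: For positive integers $a_0,\ldots,a_k$, $\overline{a_0a_1\cdots a_k}$ denotes the integer whose decimal expansion is the decimal expansion of $a_0$ followed by that of $a_1$, ..., followed by that of $a_k$. Note $l$ is the number of decimal digits of $U(n)$; e.g. for $U(n)=n+1$ the sequence $S$ is $1,121,12321,1234321,\ldots$. *)

theory Defs
  imports Complex_Main
begin

definition ndigits :: "nat \<Rightarrow> nat" where
  "ndigits a = (LEAST k. a < 10 ^ k)"

definition concat_dec :: "nat list \<Rightarrow> nat" where
  "concat_dec xs = foldl (\<lambda>acc a. acc * 10 ^ ndigits a + a) 0 xs"

definition APU :: "nat \<Rightarrow> nat \<Rightarrow> nat \<Rightarrow> nat" where
  "APU U0 d k = U0 + k * d"

definition Sseq :: "nat \<Rightarrow> nat \<Rightarrow> nat \<Rightarrow> nat" where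
  "Sseq U0 d n = concat_dec (map (APU U0 d) [0..<n] @ [APU U0 d n] @ rev (map (APU U0 d) [0..<n]))"

end

theory Submission
  imports Defs
begin

(*
  Put x = 10^L, where L is the common number of digits of U(T), ..., U(n).  Split S(k) as the
  prefix P(k+1) = U(0)...U(k) followed by the reversed prefix R(k) = U(k-1)...U(0), so that
  S(k) = P(k+1) 10^r(k) + R(k) with r(k) the number of digits of R(k).  Inside the block
  10^r(T+m) = c x^m, P(k+1) = x P(k) + U(k) and R(k+1) = R(k) + 10^r(k) U(k); as U is affine,
  both recurrences are solved by a geometric term plus an explicit particular solution, and the
  terms m x^m cancel in S.  Hence S(T+m) = A + B x^m + C x^(2m), and A, B, C are recovered from
  S(T), S(T+1), S(T+2).  The hypotheses on l and t say that L = l is the number of digits of U(n)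
  and that the block starts at T = t <= n.
*)

lemma less_power_ndigits: "a < 10 ^ ndigits a"
proof -
  have "a < 2 ^ a" by (rule less_exp)
  also have "(2::nat) ^ a \<le> 10 ^ a" by (rule power_mono) simp_all
  finally show ?thesis unfolding ndigits_def by (rule LeastI)
qed

lemma ndigits_le: "a < 10 ^ k \<Longrightarrow> ndigits a \<le> k"
  unfolding ndigits_def by (rule Least_le)

lemma ndigits_pos_iff: "0 < ndigits a \<longleftrightarrow> 0 < a"
proof
  show "0 < ndigits a \<Longrightarrow> 0 < a" using ndigits_le[of 0 0] by (cases a) auto
  show "0 < a \<Longrightarrow> 0 < ndigits a" using less_power_ndigits[of a] by (cases "ndigits a") auto
qed

lemma power_pred_ndigits_le:
  assumes "0 < ndigits a"
  shows "10 ^ (ndigits a - 1) \<le> a"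
proof (rule ccontr)
  assume "\<not> 10 ^ (ndigits a - 1) \<le> a"
  then have "ndigits a \<le> ndigits a - 1" by (intro ndigits_le) simp
  with assms show False by simp
qed

lemma ndigits_eqI:
  assumes "10 ^ (k - 1) \<le> a" and "a < 10 ^ k"
  shows "ndigits a = k"
proof (rule antisym)
  show "ndigits a \<le> k" using assms(2) by (rule ndigits_le)
  show "k \<le> ndigits a"
  proof (rule ccontr)
    assume "\<not> k \<le> ndigits a"
    then have "(10::nat) ^ ndigits a \<le> 10 ^ (k - 1)" by (intro power_increasing) auto
    with assms(1) less_power_ndigits[of a] show False by linarith
  qed
qed

lemma ceiling_log10_eq_ndigits: "\<lceil>log 10 (real a + 1)\<rceil> = int (ndigits a)"
proof (rule ceiling_unique)
  have "a + 1 \<le> 10 ^ ndigits a"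
    using less_power_ndigits[of a] by simp
  then have "real a + 1 \<le> 10 ^ ndigits a"
    by (metis of_nat_le_iff of_nat_numeral of_nat_power of_nat_Suc Suc_eq_plus1 add.commute)
  then show "log 10 (real a + 1) \<le> real_of_int (int (ndigits a))"
    by (simp add: log_le_iff powr_realpow add_pos_nonneg)
  show "real_of_int (int (ndigits a)) - 1 < log 10 (real a + 1)"
  proof (cases "ndigits a")
    case 0
    then show ?thesis using less_power_ndigits[of a] by simp
  next
    case (Suc k)
    then have "10 ^ k \<le> a" using power_pred_ndigits_le[of a] by simp
    then have "(10::real) ^ k \<le> real a"
      by (metis of_nat_le_iff of_nat_numeral of_nat_power)
    then have "(10::real) ^ k < real a + 1" by linarith
    then show ?thesis using Suc by (simp add: less_log_iff powr_realpow add_pos_nonneg)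
  qed
qed

lemma concat_dec_Nil [simp]: "concat_dec [] = 0"
  by (simp add: concat_dec_def)

lemma concat_dec_singleton [simp]: "concat_dec [a] = a"
  by (simp add: concat_dec_def)

lemma concat_dec_snoc: "concat_dec (xs @ [a]) = concat_dec xs * 10 ^ ndigits a + a"
  by (simp add: concat_dec_def)

lemma concat_dec_append:
  "concat_dec (xs @ ys) = concat_dec xs * 10 ^ sum_list (map ndigits ys) + concat_dec ys"
proof (induction ys rule: rev_induct)
  case Nil
  then show ?case by simp
next
  case (snoc y ys)
  then show ?case
    by (simp flip: append_assoc add: concat_dec_snoc algebra_simps power_add)
qed

lemma concat_dec_Cons: "concat_dec (a # xs) = a * 10 ^ sum_list (map ndigits xs) + concat_dec xs"
  using concat_dec_append[of "[a]" xs] by (simp add: concat_dec_snoc)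

lemma Sseq_eq_concat_dec:
  "Sseq U0 d k = concat_dec (map (APU U0 d) [0..<Suc k])
      * 10 ^ sum_list (map ndigits (map (APU U0 d) [0..<k]))
    + concat_dec (rev (map (APU U0 d) [0..<k]))"
proof -
  have "Sseq U0 d k = concat_dec (map (APU U0 d) [0..<Suc k] @ rev (map (APU U0 d) [0..<k]))"
    unfolding Sseq_def by simp
  then show ?thesis by (simp only: concat_dec_append rev_map[symmetric] sum_list_rev)
qed

lemma Sseq_0: "Sseq U0 d 0 = U0"
  by (simp add: Sseq_def APU_def)

lemma recurrence_difference_geometric:
  fixes p q f :: "nat \<Rightarrow> 'a::comm_ring_1"
  assumes "\<And>k. k < m \<Longrightarrow> p (Suc k) = x * p k + f k"
    and "\<And>k. k < m \<Longrightarrow> q (Suc k) = x * q k + f k"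
  shows "p m = q m + x ^ m * (p 0 - q 0)"
  using assms
proof (induction m)
  case 0
  then show ?case by simp
next
  case (Suc m)
  have "p (Suc m) = x * p m + f m" using Suc.prems(1) by simp
  also have "p m = q m + x ^ m * (p 0 - q 0)" using Suc by simp
  also have "x * (q m + x ^ m * (p 0 - q 0)) + f m = (x * q m + f m) + x ^ Suc m * (p 0 - q 0)"
    by (simp add: algebra_simps)
  also have "x * q m + f m = q (Suc m)" using Suc.prems(2) by simp
  finally show ?case .
qed

lemma APU_mono: "i \<le> j \<Longrightarrow> APU U0 d i \<le> APU U0 d j"
  by (simp add: APU_def mult_le_mono1)

lemma ndigits_APU_block:
  assumes "10 ^ (L - 1) \<le> APU U0 d T" and "APU U0 d (T + m) < 10 ^ L" and "k \<le> m"
  shows "ndigits (APU U0 d (T + k)) = L"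
proof (rule ndigits_eqI)
  show "10 ^ (L - 1) \<le> APU U0 d (T + k)"
    using assms(1) APU_mono[of T "T + k" U0 d] by simp
  show "APU U0 d (T + k) < 10 ^ L"
    using assms(2,3) APU_mono[of "T + k" "T + m" U0 d] by simp
qed

lemma sum_ndigits_APU_block:
  assumes "10 ^ (L - 1) \<le> APU U0 d T" and "APU U0 d (T + m) < 10 ^ L" and "k \<le> m"
  shows "sum_list (map ndigits (map (APU U0 d) [0..<T + k]))
           = sum_list (map ndigits (map (APU U0 d) [0..<T])) + k * L"
  using assms(3)
proof (induction k)
  case 0
  then show ?case by simp
next
  case (Suc k)
  then show ?case using ndigits_APU_block[OF assms(1,2), of k] by simp
qed

lemma Sseq_closed_form_on_digit_block:
  fixes U0 d T L :: nat
  assumes "L \<ge> 1" and low: "10 ^ (L - 1) \<le> APU U0 d T"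
  obtains A B C :: real where
    "\<And>m. APU U0 d (T + m) < 10 ^ L \<Longrightarrow>
       real (Sseq U0 d (T + m)) = A + B * (10 ^ L) ^ m + C * (10 ^ L) ^ (2 * m)"
proof -
  define x :: real where "x = 10 ^ L"
  define u :: real where "u = real (APU U0 d T)"
  define c :: real where "c = 10 ^ sum_list (map ndigits (map (APU U0 d) [0..<T]))"
  define P where "P k = real (concat_dec (map (APU U0 d) [0..<T + k]))" for k
  define R where "R k = real (concat_dec (rev (map (APU U0 d) [0..<T + k])))" for k
  \<comment> \<open>b + e k and c x^k (b' - e k) solve the recurrences for P and R; sharing e is what
    makes the terms m x^m cancel in S.\<close>
  define e where "e = real d / (1 - x)"
  define b where "b = (e - u) / (x - 1)"
  define b' where "b' = (u + x * e) / (x - 1)"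
  have "x > 1" unfolding x_def using \<open>L \<ge> 1\<close> by (intro one_less_power) auto
  then have "x - 1 \<noteq> 0" and "1 - x \<noteq> 0" by simp_all
  have e: "e * x = e - real d" using \<open>1 - x \<noteq> 0\<close> by (simp add: e_def field_simps)
  have b: "b * x = b + e - u" using \<open>x - 1 \<noteq> 0\<close> by (simp add: b_def field_simps)
  have b': "b' * x = b' + u + e * x" using \<open>x - 1 \<noteq> 0\<close> by (simp add: b'_def field_simps)
  have U: "real (APU U0 d (T + k)) = u + k * real d" for k
    unfolding u_def APU_def by (simp add: algebra_simps)
  show ?thesis
  proof (rule that[of "R 0 - c * b'" "c * (b + e + b')" "c * x * (P 0 - b)"])
    fix m assume high: "APU U0 d (T + m) < 10 ^ L"
    have digits: "10 ^ sum_list (map ndigits (map (APU U0 d) [0..<T + k])) = c * x ^ k"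
      if "k \<le> m" for k
      using sum_ndigits_APU_block[OF low high that]
      unfolding c_def x_def by (simp add: power_add power_mult mult.commute[of k L])
    have P_rec: "P (Suc k) = x * P k + (u + k * real d)" if "k < Suc m" for k
      using concat_dec_snoc[of "map (APU U0 d) [0..<T + k]" "APU U0 d (T + k)"]
        ndigits_APU_block[OF low high, of k] that
      unfolding P_def x_def U[symmetric] by (simp add: algebra_simps)
    have P_particular: "b + e * Suc k = x * (b + e * k) + (u + k * real d)" for k
    proof -
      have "x * (b + e * k) + (u + k * real d) = b * x + k * (e * x) + u + k * real d"
        by (simp add: algebra_simps)
      then show ?thesis unfolding b e by (simp add: algebra_simps)
    qed
    have P: "P (Suc m) = b + e * Suc m + x ^ Suc m * (P 0 - b)"
      using recurrence_difference_geometric[where m = "Suc m" and q = "\<lambda>k. b + e * k",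
          OF P_rec P_particular]
      by simp
    have R_rec: "R (Suc k) = 1 * R k + c * x ^ k * (u + k * real d)" if "k < m" for k
      using concat_dec_Cons[of "APU U0 d (T + k)" "rev (map (APU U0 d) [0..<T + k])"]
        digits[of k] that
      unfolding R_def U[symmetric] by (simp add: rev_map[symmetric] sum_list_rev)
    have R_particular: "c * x ^ Suc k * (b' - e * Suc k)
        = 1 * (c * x ^ k * (b' - e * k)) + c * x ^ k * (u + k * real d)" for k
    proof -
      have "c * x ^ Suc k * (b' - e * Suc k) = c * x ^ k * (b' * x - k * (e * x) - e * x)"
        by (simp add: algebra_simps)
      then show ?thesis unfolding b' e by (simp add: algebra_simps)
    qed
    have R: "R m = c * x ^ m * (b' - e * m) + (R 0 - c * b')"
      using recurrence_difference_geometric[where m = m and q = "\<lambda>k. c * x ^ k * (b' - e * k)",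
          OF R_rec R_particular]
      by simp
    have "real (Sseq U0 d (T + m)) = P (Suc m) * (c * x ^ m) + R m"
      using Sseq_eq_concat_dec[of U0 d "T + m"] digits[of m] unfolding P_def R_def by simp
    also have "\<dots> = (R 0 - c * b') + c * (b + e + b') * x ^ m + c * x * (P 0 - b) * x ^ (2 * m)"
      unfolding P R mult_2 power_add by (simp add: algebra_simps)
    finally show "real (Sseq U0 d (T + m)) = (R 0 - c * b') + c * (b + e + b') * (10 ^ L) ^ m
        + c * x * (P 0 - b) * (10 ^ L) ^ (2 * m)"
      unfolding x_def .
  qed
qed

lemma APU_nat_floor_le:
  assumes "0 < d" and "0 \<le> \<lfloor>(y - real U0) / real d\<rfloor>"
  shows "real (APU U0 d (nat \<lfloor>(y - real U0) / real d\<rfloor>)) \<le> y"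
proof -
  have "real (nat \<lfloor>(y - real U0) / real d\<rfloor>) \<le> (y - real U0) / real d"
    using assms(2) by simp
  with \<open>0 < d\<close> show ?thesis by (simp add: APU_def pos_le_divide_eq algebra_simps)
qed

lemma three_point_geometric_interpolation:
  fixes x A B C s0 s1 s2 :: real
  assumes "x > 1"
    and s0: "s0 = A + B + C" and s1: "s1 = A + B * x + C * x ^ 2"
    and s2: "s2 = A + B * x ^ 2 + C * x ^ 4"
  shows "A = (x ^ 3 * s0 - x * (x + 1) * s1 + s2) / ((x + 1) * (x - 1) ^ 2)"
    and "B = - ((x ^ 2 * s0 - (x ^ 2 + 1) * s1 + s2) / (x * (x - 1) ^ 2))"
    and "C = (x * s0 - (x + 1) * s1 + s2) / (x * (x + 1) * (x - 1) ^ 2)"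
proof -
  have "x ^ 3 * s0 - x * (x + 1) * s1 + s2 = A * ((x + 1) * (x - 1) ^ 2)"
    and "x ^ 2 * s0 - (x ^ 2 + 1) * s1 + s2 = - (B * (x * (x - 1) ^ 2))"
    and "x * s0 - (x + 1) * s1 + s2 = C * (x * (x + 1) * (x - 1) ^ 2)"
    unfolding s0 s1 s2 by algebra+
  moreover have "(x + 1) * (x - 1) ^ 2 \<noteq> 0" and "x * (x - 1) ^ 2 \<noteq> 0"
    and "x * (x + 1) * (x - 1) ^ 2 \<noteq> 0"
    using \<open>x > 1\<close> by auto
  ultimately show "A = (x ^ 3 * s0 - x * (x + 1) * s1 + s2) / ((x + 1) * (x - 1) ^ 2)"
    and "B = - ((x ^ 2 * s0 - (x ^ 2 + 1) * s1 + s2) / (x * (x - 1) ^ 2))"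
    and "C = (x * s0 - (x + 1) * s1 + s2) / (x * (x + 1) * (x - 1) ^ 2)"
    by simp_all
qed

lemma Sseq_three_point_formula:
  fixes x s0 s1 s2 :: real
  assumes "L \<ge> 1" and low: "10 ^ (L - 1) \<le> APU U0 d T"
    and "APU U0 d (T + 2) < 10 ^ L" and "APU U0 d (T + m) < 10 ^ L"
    and x: "x = 10 ^ L"
    and "s0 = real (Sseq U0 d T)" and "s1 = real (Sseq U0 d (T + 1))"
    and "s2 = real (Sseq U0 d (T + 2))"
  shows "real (Sseq U0 d (T + m)) =
      (x ^ 3 * s0 - x * (x + 1) * s1 + s2) / ((x + 1) * (x - 1) ^ 2)
    - (x ^ 2 * s0 - (x ^ 2 + 1) * s1 + s2) / (x * (x - 1) ^ 2) * x ^ m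
    + (x * s0 - (x + 1) * s1 + s2) / (x * (x + 1) * (x - 1) ^ 2) * x ^ (2 * m)"
proof -
  obtain A B C where S: "\<And>m. APU U0 d (T + m) < 10 ^ L \<Longrightarrow>
       real (Sseq U0 d (T + m)) = A + B * x ^ m + C * x ^ (2 * m)"
    using Sseq_closed_form_on_digit_block[OF \<open>L \<ge> 1\<close> low] unfolding x by blast
  have "APU U0 d (T + k) < 10 ^ L" if "k \<le> 2" for k
    using APU_mono[of "T + k" "T + 2" U0 d] that assms(3) by simp
  note S_block = S[OF this]
  have "s0 = A + B + C" and "s1 = A + B * x + C * x ^ 2" and "s2 = A + B * x ^ 2 + C * x ^ 4"
    using S_block[of 0] S_block[of 1] S_block[of 2] assms(6-8) by (simp_all add: power_mult)
  moreover have "x > 1" unfolding x using \<open>L \<ge> 1\<close> by (intro one_less_power) auto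
  ultimately have "A = (x ^ 3 * s0 - x * (x + 1) * s1 + s2) / ((x + 1) * (x - 1) ^ 2)"
    and "B = - ((x ^ 2 * s0 - (x ^ 2 + 1) * s1 + s2) / (x * (x - 1) ^ 2))"
    and "C = (x * s0 - (x + 1) * s1 + s2) / (x * (x + 1) * (x - 1) ^ 2)"
    by (blast intro: three_point_geometric_interpolation)+
  with S[OF assms(4)] show ?thesis by simp
qed

theorem theorem3:
  fixes U0 d n :: nat and l t :: int and s0 s1 s2 \<alpha> \<mu> \<theta> :: real
  assumes "U0 \<ge> 1" and "d \<ge> 1"
    and l_def: "l = \<lceil>log 10 (real (n * d + Sseq U0 d 0 + 1))\<rceil>"
    and t_def: "t = \<lfloor>((10::real) powi (l - 1) - real (Sseq U0 d 0)) / real d\<rfloor>"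
    and "t \<ge> 0"
    and "real (APU U0 d (nat t)) \<ge> (10::real) powi (l - 1)"
    and "real (APU U0 d (nat t + 2)) < (10::real) powi l"
    and "s0 = real (Sseq U0 d (nat t))"
    and "s1 = real (Sseq U0 d (nat t + 1))"
    and "s2 = real (Sseq U0 d (nat t + 2))"
    and "\<alpha> = ((10::real) powi (3*l) * s0 - 10 powi l * (10 powi l + 1) * s1 + s2)
              / ((10 powi l + 1) * (10 powi l - 1)^2)"
    and "\<mu> = - (((10::real) powi (2*l) * s0 - (10 powi (2*l) + 1) * s1 + s2)
              / (10 powi l * (10 powi l - 1)^2))"
    and "\<theta> = ((10::real) powi l * s0 - (10 powi l + 1) * s1 + s2)
              / (10 powi l * (10 powi l + 1) * (10 powi l - 1)^2)"
  shows "real (Sseq U0 d n) = \<alpha> + \<mu> * (10::real) powi (l * (int n - t))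
           + \<theta> * (10::real) powi (2 * l * (int n - t))"
proof -
  define L where "L = ndigits (APU U0 d n)"
  define T where "T = nat t"
  define x :: real where "x = 10 ^ L"
  have l: "l = int L" and t: "t = int T"
    using l_def \<open>t \<ge> 0\<close> ceiling_log10_eq_ndigits[of "APU U0 d n"]
    by (simp_all add: L_def T_def Sseq_0 APU_def add.commute)
  have "L \<ge> 1" using \<open>U0 \<ge> 1\<close> by (simp add: L_def ndigits_pos_iff APU_def Suc_le_eq)
  then have "l - 1 = int (L - 1)" by (simp add: l of_nat_diff)
  then have pow_l_pred: "(10::real) powi (l - 1) = 10 ^ (L - 1)" by simp
  have pow_l: "(10::real) powi (int k * l) = x ^ k" for k
    by (simp add: l x_def power_mult mult.commute[of k L] flip: of_nat_mult)
  have "APU U0 d T \<le> 10 ^ (L - 1)"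
    using APU_nat_floor_le[of d "10 powi (l - 1)" U0] \<open>d \<ge> 1\<close> \<open>t \<ge> 0\<close>
    unfolding T_def t_def Sseq_0 pow_l_pred by simp
  also have "10 ^ (L - 1) \<le> APU U0 d n"
    using power_pred_ndigits_le[of "APU U0 d n"] \<open>L \<ge> 1\<close> unfolding L_def by simp
  finally have "T \<le> n" using \<open>d \<ge> 1\<close> by (simp add: APU_def)
  have "real (Sseq U0 d (T + (n - T))) = \<alpha> + \<mu> * x ^ (n - T) + \<theta> * x ^ (2 * (n - T))"
  proof (subst Sseq_three_point_formula[OF \<open>L \<ge> 1\<close> _ _ _ x_def])
    show "10 ^ (L - 1) \<le> APU U0 d T" and "APU U0 d (T + 2) < 10 ^ L"
      using assms(6,7) pow_l[of 1] unfolding pow_l_pred T_def x_def by simp_all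
    show "APU U0 d (T + (n - T)) < 10 ^ L"
      using \<open>T \<le> n\<close> less_power_ndigits unfolding L_def by simp
  qed (use assms(8-13) pow_l[of 1] pow_l[of 2] pow_l[of 3] in \<open>simp_all add: T_def\<close>)
  moreover have "l * (int n - t) = int (n - T) * l"
    and "2 * l * (int n - t) = int (2 * (n - T)) * l"
    using \<open>T \<le> n\<close> by (simp_all add: t of_nat_diff)
  ultimately show ?thesis
    using \<open>T \<le> n\<close> by (simp only: pow_l le_add_diff_inverse)
qed

end
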